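(* Let $A \subseteq \mathbb{N}$ be a normal set. Then there exist $x,y,z \in A$ with $x \neq y$ such that $xy = z^2$.
   Context: $\mathbb{N} = \{1,2,3,\dots\}$. An infinite binary sequence $(\lambda_i)_{i \ge 1}$ is called normal if every finite binary word $\omega$ of length $|\omega|$ occurs in the sequence with asymptotic frequency $2^{-|\omega|}$, i.e. the number of $i \le N$ with $(\lambda_i,\dots,\lambda_{i+|\omega|-1}) = \omega$, divided by $N$, tends to $2^{-|\omega|}$ as $N \to \infty$. A set $B \subseteq \mathbb{N}$ is called normal if its indicator sequence ($\lambda_i = 1$ iff $i \in B$) is normal. *)

theory Defs
  imports Complex_Main
begin

text \<open>Binary sequences are indexed from 1: only the values at positive indices matter.\<close>

definition occurs_at :: "(nat \<Rightarrow> bool) \<Rightarrow> bool list \<Rightarrow> nat \<Rightarrow> bool" where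
  "occurs_at lam w i \<longleftrightarrow> (\<forall>j < length w. lam (i + j) = w ! j)"

definition normal_seq :: "(nat \<Rightarrow> bool) \<Rightarrow> bool" where
  "normal_seq lam \<longleftrightarrow>
     (\<forall>w :: bool list.
        (\<lambda>N. real (card {i \<in> {1..N}. occurs_at lam w i}) / real N)
          \<longlonglongrightarrow> (1 / 2) ^ length w)"

definition normal_set :: "nat set \<Rightarrow> bool" where
  "normal_set B \<longleftrightarrow> normal_seq (\<lambda>i. i \<in> B)"

end

theory Submission
  imports Defs
begin

(* If no x ~= y and z in A satisfy x y = z^2, then for every c >= 1 the set of exponents
   {k < 17. 2^k c : A} contains no three-term arithmetic progression, since
   2^a c * 2^(a+2d) c = (2^(a+d) c)^2; such a subset of {0..16} has at most 8 elements
   (17 is the least n for which progression-free subsets of {0..<n} have fewer than n/2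
   elements).
   Counting the pairs (k, c) with k < 17, c <= M and 2^k c : A therefore gives at most 8 M.
   On the other hand, normality forces every dilate {c. q c : A} to have lower density at
   least 1/2. The number S of elements of A among q c, q (c + 1), ..., q (c + r - 1) is read
   off a window of length q r; windows are equidistributed, so the mean of (S - r/2)^2 over
   c <= M is at most about q r/4, and averaging S - r/2 >= - t/2 - (S - r/2)^2/(2 t) gives
   mean S >= r/2 - O(sqrt (q r)). Hence the count is at least about 17 M/2 > 8 M. *)

definition ap3_free :: "nat set \<Rightarrow> bool" where
  "ap3_free B \<longleftrightarrow> (\<forall>a d. 0 < d \<longrightarrow> \<not> (a \<in> B \<and> a + d \<in> B \<and> a + 2 * d \<in> B))"

lemma ap3_free_subset: "ap3_free B \<Longrightarrow> C \<subseteq> B \<Longrightarrow> ap3_free C"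
  unfolding ap3_free_def by blast

lemma ap3_freeD:
  assumes "ap3_free B" and "i < j" and "i + k = 2 * j"
  shows "\<not> (i \<in> B \<and> j \<in> B \<and> k \<in> B)"
proof -
  have "j = i + (j - i)" and "k = i + 2 * (j - i)" and "0 < j - i"
    using assms(2,3) by auto
  then show ?thesis
    using assms(1) unfolding ap3_free_def by metis
qed

lemma card_ap3_free_le_4:
  assumes "ap3_free B" and "B \<subseteq> {..<8}"
  shows "card B \<le> 4"
proof -
  have "\<not> (0 \<in> B \<and> 1 \<in> B \<and> 2 \<in> B)" "\<not> (1 \<in> B \<and> 2 \<in> B \<and> 3 \<in> B)"
    "\<not> (2 \<in> B \<and> 3 \<in> B \<and> 4 \<in> B)" "\<not> (3 \<in> B \<and> 4 \<in> B \<and> 5 \<in> B)"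
    "\<not> (4 \<in> B \<and> 5 \<in> B \<and> 6 \<in> B)" "\<not> (5 \<in> B \<and> 6 \<in> B \<and> 7 \<in> B)"
    "\<not> (0 \<in> B \<and> 2 \<in> B \<and> 4 \<in> B)" "\<not> (1 \<in> B \<and> 3 \<in> B \<and> 5 \<in> B)"
    "\<not> (2 \<in> B \<and> 4 \<in> B \<and> 6 \<in> B)" "\<not> (3 \<in> B \<and> 5 \<in> B \<and> 7 \<in> B)"
    "\<not> (0 \<in> B \<and> 3 \<in> B \<and> 6 \<in> B)" "\<not> (1 \<in> B \<and> 4 \<in> B \<and> 7 \<in> B)"
    by (rule ap3_freeD[OF assms(1)]; simp)+
  moreover have "card B = (\<Sum>i<8. if i \<in> B then 1 else 0)"
    using assms(2) by (simp add: sum.If_cases Int_absorb1)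
  ultimately show ?thesis
    by (simp add: lessThan_nat_numeral del: sum_of_bool_eq)
qed

lemma card_ap3_free_window_le_4:
  assumes "ap3_free B"
  shows "card (B \<inter> {a..<a + 8}) \<le> 4"
proof -
  let ?C = "{i. a + i \<in> B} \<inter> {..<8}"
  have "B \<inter> {a..<a + 8} = (+) a ` ?C"
  proof (intro equalityI subsetI)
    fix x assume "x \<in> B \<inter> {a..<a + 8}"
    then show "x \<in> (+) a ` ?C"
      by (intro image_eqI[of _ _ "x - a"]) auto
  qed auto
  then have "card (B \<inter> {a..<a + 8}) = card ?C"
    by (simp add: card_image)
  also have "card ?C \<le> 4"
  proof (rule card_ap3_free_le_4)
    show "ap3_free ?C"
      using assms unfolding ap3_free_def by (auto simp flip: add.assoc)
  qed auto
  finally show ?thesis .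
qed

lemma card_ap3_free_le_8:
  assumes "ap3_free B" and "B \<subseteq> {..<17}"
  shows "card B \<le> 8"
proof (rule ccontr)
  assume "\<not> card B \<le> 8"
  have mem: "x \<in> B" if "B \<subseteq> {x} \<union> {a..<a + 8} \<union> {b..<b + 8}" for x a b
  proof (rule ccontr)
    assume "x \<notin> B"
    with that have "B = (B \<inter> {a..<a + 8}) \<union> (B \<inter> {b..<b + 8})"
      by blast
    then have "card B \<le> card (B \<inter> {a..<a + 8}) + card (B \<inter> {b..<b + 8})"
      by (metis card_Un_le)
    with \<open>\<not> card B \<le> 8\<close> show False
      using card_ap3_free_window_le_4[OF assms(1), of a] card_ap3_free_window_le_4[OF assms(1), of b]
      by linarith
  qed
  have "0 \<in> B" by (rule mem[of 0 1 9]) (use assms(2) in auto)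
  moreover have "8 \<in> B" by (rule mem[of 8 0 9]) (use assms(2) in auto)
  moreover have "16 \<in> B" by (rule mem[of 16 0 8]) (use assms(2) in auto)
  ultimately show False
    using ap3_freeD[OF assms(1), of 0 8 16] by simp
qed

definition centred_bit :: "bool \<Rightarrow> real" where
  "centred_bit b = of_bool b - 1 / 2"

definition window :: "(nat \<Rightarrow> bool) \<Rightarrow> nat \<Rightarrow> nat \<Rightarrow> bool list" where
  "window lam R i = map (\<lambda>j. lam (i + j)) [0..<R]"

lemma centred_bit_mult_self [simp]: "centred_bit b * centred_bit b = 1 / 4"
  by (simp add: centred_bit_def)

lemma length_window [simp]: "length (window lam R i) = R"
  by (simp add: window_def)

lemma nth_window [simp]: "j < R \<Longrightarrow> window lam R i ! j = lam (i + j)"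
  by (simp add: window_def)

lemma occurs_at_iff_window: "length w = R \<Longrightarrow> occurs_at lam w i \<longleftrightarrow> w = window lam R i"
  by (auto simp: occurs_at_def list_eq_iff_nth_eq)

lemma sum_window_eq_sum_words:
  "(\<Sum>i\<in>{1..N}. g (window lam R i)) =
     (\<Sum>w | length w = R. g w * real (card {i \<in> {1..N}. occurs_at lam w i}))"
proof -
  have "(\<Sum>w | length w = R. g w * real (card {i \<in> {1..N}. occurs_at lam w i}))
      = (\<Sum>w | length w = R. \<Sum>i\<in>{1..N}. if occurs_at lam w i then g w else 0)"
    by (simp add: sum.If_cases Int_def mult.commute)
  also have "\<dots> = (\<Sum>i\<in>{1..N}. \<Sum>w | length w = R. if w = window lam R i then g w else 0)"
    by (subst sum.swap) (intro sum.cong refl, auto simp: occurs_at_iff_window)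
  also have "\<dots> = (\<Sum>i\<in>{1..N}. g (window lam R i))"
    by (simp add: finite_list_length)
  finally show ?thesis ..
qed

lemma normal_seq_window_mean:
  assumes "normal_seq lam"
  shows "(\<lambda>N. (\<Sum>i\<in>{1..N}. g (window lam R i)) / real N)
           \<longlonglongrightarrow> (\<Sum>w | length w = R. g w) / 2 ^ R"
proof -
  have "(\<lambda>N. \<Sum>w | length w = R. g w * (real (card {i \<in> {1..N}. occurs_at lam w i}) / real N))
          \<longlonglongrightarrow> (\<Sum>w | length w = R. g w * (1 / 2) ^ R)"
    by (intro tendsto_sum tendsto_mult_left) (use assms in \<open>auto simp: normal_seq_def\<close>)
  moreover have "(\<lambda>N. \<Sum>w | length w = R. g w * (real (card {i \<in> {1..N}. occurs_at lam w i}) / real N))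
      = (\<lambda>N. (\<Sum>i\<in>{1..N}. g (window lam R i)) / real N)"
    by (simp only: sum_window_eq_sum_words sum_divide_distrib times_divide_eq_right)
  ultimately show ?thesis
    by (simp add: sum_divide_distrib power_one_over)
qed

lemma sum_words_centred_bit_mult:
  assumes "i < R" and "j < R" and "i \<noteq> j"
  shows "(\<Sum>w | length w = R. centred_bit (w ! i) * centred_bit (w ! j)) = 0"
proof -
  let ?flip = "\<lambda>w :: bool list. w[i := \<not> w ! i]"
  have "(\<Sum>w | length w = R. - (centred_bit (w ! i) * centred_bit (w ! j)))
      = (\<Sum>w | length w = R. centred_bit (w ! i) * centred_bit (w ! j))"
    by (rule sum.reindex_bij_witness[of _ ?flip ?flip])
       (use assms in \<open>auto simp: list_eq_iff_nth_eq nth_list_update centred_bit_def\<close>)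
  then show ?thesis
    by (simp add: sum_negf)
qed

lemma sum_words_square_sum_centred_bit:
  assumes "inj_on p {..<r}" and "p ` {..<r} \<subseteq> {..<R}"
  shows "(\<Sum>w | length w = R. (\<Sum>s<r. centred_bit (w ! p s))\<^sup>2) = real r * 2 ^ R / 4"
proof -
  let ?W = "{w :: bool list. length w = R}"
  have diagonal: "(\<Sum>s'<r. \<Sum>w\<in>?W. centred_bit (w ! p s) * centred_bit (w ! p s')) = 2 ^ R / 4"
    if "s < r" for s
  proof -
    have "(\<Sum>s'<r. \<Sum>w\<in>?W. centred_bit (w ! p s) * centred_bit (w ! p s'))
        = (\<Sum>s'\<in>{s}. \<Sum>w\<in>?W. centred_bit (w ! p s) * centred_bit (w ! p s'))"
      using assms that
      by (intro sum.mono_neutral_right) (auto simp: inj_on_eq_iff intro!: sum_words_centred_bit_mult)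
    also have "\<dots> = card ?W / 4"
      by simp
    finally show ?thesis
      using card_lists_length_eq[of "UNIV :: bool set" R] by simp
  qed
  have "(\<Sum>w\<in>?W. (\<Sum>s<r. centred_bit (w ! p s))\<^sup>2)
      = (\<Sum>s<r. \<Sum>s'<r. \<Sum>w\<in>?W. centred_bit (w ! p s) * centred_bit (w ! p s'))"
    by (simp add: power2_eq_square sum_product sum.swap[of _ ?W])
  also have "\<dots> = real r * 2 ^ R / 4"
    by (simp add: diagonal)
  finally show ?thesis .
qed

lemma card_filter_shift_le:
  fixes M s :: nat
  shows "card {c \<in> {1..M}. P (c + s)} \<le> card {c \<in> {1..M}. P c} + s"
proof -
  have "card ((\<lambda>c. c + s) ` {c \<in> {1..M}. P (c + s)}) \<le> card ({c \<in> {1..M}. P c} \<union> {M<..M + s})"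
    by (intro card_mono) auto
  also have "\<dots> \<le> card {c \<in> {1..M}. P c} + card {M<..M + s}"
    by (rule card_Un_le)
  finally show ?thesis
    by (simp add: card_image)
qed

lemma card_multiples_lower_bound:
  fixes lam :: "nat \<Rightarrow> bool" and q r M :: nat and t :: real
  assumes "0 < q" and "0 < t"
  shows "real M * (real r / 2 - t / 2)
           - (\<Sum>i\<in>{1..q * M}. (\<Sum>s<r. centred_bit (window lam (r * q) i ! (s * q)))\<^sup>2) / (2 * t)
         \<le> real r * (real (card {c \<in> {1..M}. lam (q * c)}) + real r)"
proof -
  define g where "g w = (\<Sum>s<r. centred_bit (w ! (s * q)))\<^sup>2" for w
  define S where "S c = (\<Sum>s<r. of_bool (lam (q * (c + s))) :: real)" for c
  define D where "D = card {c \<in> {1..M}. lam (q * c)}"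
  have sum_S: "(\<Sum>c\<in>{1..M}. S c) \<le> real r * (real D + real r)"
  proof -
    have "(\<Sum>c\<in>{1..M}. S c) = (\<Sum>s<r. real (card {c \<in> {1..M}. lam (q * (c + s))}))"
      unfolding S_def by (subst sum.swap) (simp add: Int_def)
    also have "\<dots> \<le> (\<Sum>s<r. real D + real r)"
    proof (rule sum_mono)
      fix s assume "s \<in> {..<r}"
      then show "real (card {c \<in> {1..M}. lam (q * (c + s))}) \<le> real D + real r"
        using card_filter_shift_le[of M "\<lambda>c. lam (q * c)" s] unfolding D_def by simp
    qed
    finally show ?thesis
      by simp
  qed
  have S_deviation: "S c - real r / 2 = (\<Sum>s<r. centred_bit (window lam (r * q) (q * c) ! (s * q)))" for c
    using \<open>0 < q\<close> by (simp add: S_def centred_bit_def sum_subtractf algebra_simps)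
  have S_lower: "real r / 2 - t / 2 - g (window lam (r * q) (q * c)) / (2 * t) \<le> S c" for c
  proof -
    \<comment> \<open>AM-GM in the form \<open>u \<ge> - t/2 - u\<^sup>2/(2t)\<close>, i.e. \<open>(u + t)\<^sup>2 \<ge> 0\<close>, for \<open>u = S c - r/2\<close>\<close>
    have "0 \<le> (S c - real r / 2 + t)\<^sup>2"
      by simp
    then show ?thesis
      using \<open>0 < t\<close> unfolding g_def S_deviation[symmetric]
      by (simp add: field_simps power2_eq_square)
  qed
  have g_multiples: "(\<Sum>c\<in>{1..M}. g (window lam (r * q) (q * c)))
      \<le> (\<Sum>i\<in>{1..q * M}. g (window lam (r * q) i))"
  proof -
    have "(\<Sum>c\<in>{1..M}. g (window lam (r * q) (q * c))) = (\<Sum>i\<in>(*) q ` {1..M}. g (window lam (r * q) i))"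
      using \<open>0 < q\<close> by (simp add: sum.reindex inj_on_def)
    also have "\<dots> \<le> (\<Sum>i\<in>{1..q * M}. g (window lam (r * q) i))"
      by (rule sum_mono2) (use \<open>0 < q\<close> in \<open>auto simp: g_def\<close>)
    finally show ?thesis .
  qed
  have "real M * (real r / 2 - t / 2) - (\<Sum>i\<in>{1..q * M}. g (window lam (r * q) i)) / (2 * t)
      \<le> real M * (real r / 2 - t / 2) - (\<Sum>c\<in>{1..M}. g (window lam (r * q) (q * c))) / (2 * t)"
    using g_multiples \<open>0 < t\<close> by (simp add: divide_right_mono)
  also have "\<dots> = (\<Sum>c\<in>{1..M}. real r / 2 - t / 2 - g (window lam (r * q) (q * c)) / (2 * t))"
    by (simp add: sum_subtractf sum_divide_distrib)
  also have "\<dots> \<le> (\<Sum>c\<in>{1..M}. S c)"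
    by (rule sum_mono[OF S_lower])
  also have "\<dots> \<le> real r * (real D + real r)"
    by (rule sum_S)
  finally show ?thesis
    unfolding D_def g_def .
qed

lemma normal_seq_lower_density_multiples:
  assumes "normal_seq lam" and "0 < q" and "0 < \<epsilon>"
  shows "\<forall>\<^sub>F M in sequentially. (1 / 2 - \<epsilon>) * real M \<le> real (card {c \<in> {1..M}. lam (q * c)})"
proof -
  obtain m :: nat where m: "1 / \<epsilon> < real m"
    using reals_Archimedean2 by blast
  moreover have "0 < 1 / \<epsilon>"
    using \<open>0 < \<epsilon>\<close> by simp
  ultimately have "0 < m"
    using of_nat_0_less_iff order.strict_trans by blast
  have m_small: "5 / (8 * real m) < \<epsilon>"
    using m \<open>0 < \<epsilon>\<close> \<open>0 < m\<close> by (simp add: field_simps)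
  define r where "r = q * m * m"
  define t where "t = real (q * m)"
  define G where "G N = (\<Sum>i\<in>{1..N}. (\<Sum>s<r. centred_bit (window lam (r * q) i ! (s * q)))\<^sup>2)" for N
  have "0 < r" and "0 < t"
    using \<open>0 < q\<close> \<open>0 < m\<close> by (simp_all add: r_def t_def)
  have G_mean: "(\<lambda>N. G N / real N) \<longlonglongrightarrow> real r / 4"
  proof -
    have words: "(\<Sum>w | length w = r * q. (\<Sum>s<r. centred_bit (w ! (s * q)))\<^sup>2) = real r * 2 ^ (r * q) / 4"
      using \<open>0 < q\<close> by (intro sum_words_square_sum_centred_bit) (auto simp: inj_on_def)
    then show ?thesis
      using normal_seq_window_mean[OF assms(1), of "\<lambda>w. (\<Sum>s<r. centred_bit (w ! (s * q)))\<^sup>2" "r * q"]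
      unfolding G_def words by simp
  qed
  have "strict_mono ((*) q)"
    using \<open>0 < q\<close> by (simp add: strict_mono_def)
  then have G_multiples: "(\<lambda>M. G (q * M) / real (q * M)) \<longlonglongrightarrow> real r / 4"
    using LIMSEQ_subseq_LIMSEQ[OF G_mean] by (simp only: comp_def)
  define h where "h M = 1 / 2 - t / (2 * r) - r / M - q / (2 * t * r) * (G (q * M) / real (q * M))" for M
  have "h \<longlonglongrightarrow> 1 / 2 - t / (2 * r) - 0 - q / (2 * t * r) * (real r / 4)"
    unfolding h_def by (intro tendsto_intros G_multiples)
  moreover have "1 / 2 - t / (2 * r) - 0 - q / (2 * t * r) * (real r / 4) = 1 / 2 - 5 / (8 * real m)"
    using \<open>0 < q\<close> \<open>0 < m\<close> by (simp add: r_def t_def field_simps)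
  ultimately have "\<forall>\<^sub>F M in sequentially. 1 / 2 - \<epsilon> < h M"
    using m_small by (auto intro: order_tendstoD)
  then show ?thesis
    using eventually_gt_at_top[of 0]
  proof eventually_elim
    case (elim M)
    then have "0 < M"
      by simp
    have key: "real M * (real r / 2 - t / 2) - G (q * M) / (2 * t)
        \<le> real r * (real (card {c \<in> {1..M}. lam (q * c)}) + real r)"
      using card_multiples_lower_bound[OF \<open>0 < q\<close> \<open>0 < t\<close>] unfolding G_def .
    have "real M * h M = (real M * (real r / 2 - t / 2) - G (q * M) / (2 * t)) / real r - real r"
      using \<open>0 < q\<close> \<open>0 < r\<close> \<open>0 < t\<close> \<open>0 < M\<close> by (simp add: h_def field_simps)
    also have "\<dots> \<le> real (card {c \<in> {1..M}. lam (q * c)})"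
      using key \<open>0 < r\<close> by (simp add: field_simps)
    finally have "real M * h M \<le> real (card {c \<in> {1..M}. lam (q * c)})" .
    moreover have "(1 / 2 - \<epsilon>) * real M \<le> real M * h M"
      using elim(1) by (simp add: mult.commute mult_left_mono)
    ultimately show ?case
      by linarith
  qed
qed

lemma ap3_free_dyadic_exponents:
  fixes A :: "nat set" and c :: nat
  assumes no_sq: "\<forall>x\<in>A. \<forall>y\<in>A. \<forall>z\<in>A. x * y = z ^ 2 \<longrightarrow> x = y" and "0 < c"
  shows "ap3_free {k. 2 ^ k * c \<in> A}"
  unfolding ap3_free_def
proof (intro allI impI notI)
  fix a d :: nat
  assume "0 < d" and "a \<in> {k. 2 ^ k * c \<in> A} \<and> a + d \<in> {k. 2 ^ k * c \<in> A}
    \<and> a + 2 * d \<in> {k. 2 ^ k * c \<in> A}"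
  then have "2 ^ a * c \<in> A" and "2 ^ (a + d) * c \<in> A" and "2 ^ (a + 2 * d) * c \<in> A"
    by simp_all
  moreover have "2 ^ a * c * (2 ^ (a + 2 * d) * c) = (2 ^ (a + d) * c) ^ 2"
    by (simp add: power_add power_mult power2_eq_square ac_simps)
  moreover have "2 ^ a * c < 2 ^ (a + 2 * d) * c"
    using \<open>0 < d\<close> \<open>0 < c\<close> by simp
  ultimately show False
    using no_sq by (metis less_irrefl)
qed

lemma sum_card_dyadic_multiples_le:
  assumes "\<forall>x\<in>A. \<forall>y\<in>A. \<forall>z\<in>A. x * y = z ^ 2 \<longrightarrow> x = y"
  shows "(\<Sum>k<17. card {c \<in> {1..M}. 2 ^ k * c \<in> A}) \<le> 8 * M"
proof -
  have "(\<Sum>k<17. card {c \<in> {1..M}. 2 ^ k * c \<in> A}) = (\<Sum>c\<in>{1..M}. card {k \<in> {..<17}. 2 ^ k * c \<in> A})"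
    by (rule sum_multicount_gen) auto
  also have "\<dots> \<le> (\<Sum>c\<in>{1..M}. 8)"
  proof (rule sum_mono)
    fix c assume "c \<in> {1..M}"
    then have "ap3_free {k. 2 ^ k * c \<in> A}"
      by (intro ap3_free_dyadic_exponents[OF assms]) simp
    then have "ap3_free {k \<in> {..<17}. 2 ^ k * c \<in> A}"
      by (rule ap3_free_subset) auto
    then show "card {k \<in> {..<17}. 2 ^ k * c \<in> A} \<le> 8"
      by (rule card_ap3_free_le_8) auto
  qed
  finally show ?thesis
    by simp
qed

theorem mainTheorem5:
  fixes A :: "nat set"
  assumes "A \<subseteq> {1..}" and "normal_set A"
  shows "\<exists>x\<in>A. \<exists>y\<in>A. \<exists>z\<in>A. x \<noteq> y \<and> x * y = z ^ 2"
proof (rule ccontr)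
  assume "\<not> ?thesis"
  then have no_sq: "\<forall>x\<in>A. \<forall>y\<in>A. \<forall>z\<in>A. x * y = z ^ 2 \<longrightarrow> x = y"
    by blast
  have "normal_seq (\<lambda>i. i \<in> A)"
    using \<open>normal_set A\<close> unfolding normal_set_def .
  then have "\<forall>\<^sub>F M in sequentially.
      (1 / 2 - 1 / 68) * real M \<le> real (card {c \<in> {1..M}. 2 ^ k * c \<in> A})" for k :: nat
    by (rule normal_seq_lower_density_multiples) simp_all
  then have "\<forall>\<^sub>F M in sequentially. 0 < M \<and> (\<forall>k\<in>{..<17::nat}.
      (1 / 2 - 1 / 68) * real M \<le> real (card {c \<in> {1..M}. 2 ^ k * c \<in> A}))"
    by (intro eventually_conj eventually_gt_at_top eventually_ball_finite) simp_all
  then obtain M where "0 < M" and lower: "\<forall>k\<in>{..<17::nat}.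
      (1 / 2 - 1 / 68) * real M \<le> real (card {c \<in> {1..M}. 2 ^ k * c \<in> A})"
    using eventually_happens'[OF sequentially_bot] by blast
  have "33 / 4 * real M = (\<Sum>k<17::nat. (1 / 2 - 1 / 68) * real M)"
    by simp
  also have "\<dots> \<le> (\<Sum>k<17. real (card {c \<in> {1..M}. 2 ^ k * c \<in> A}))"
    using lower by (intro sum_mono) blast
  also have "\<dots> \<le> 8 * real M"
    using sum_card_dyadic_multiples_le[OF no_sq, of M] by (simp flip: of_nat_sum)
  finally show False
    using \<open>0 < M\<close> by simp
qed

end
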